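(* Let $H=\operatorname{diag}(\lambda_1,\dots,\lambda_n)$ with $\lambda_1\ge\dots\ge\lambda_{n-p}\ge0>\lambda_{n-p+1}\ge\dots\ge\lambda_n$ for some $1\le p<n$, let $L=\max(\lambda_1,-\lambda_n)$ and $0<\alpha<1/L$. Let $(\gamma_k)_{k\ge1}$, $(\beta_k)_{k\ge1}$ be sequences in $[0,1]$ with $\gamma_{k+1}\ge\gamma_k$ and $\beta_{k+1}\ge\beta_k$ for all $k$, and let $\bar\gamma=\lim_{k\to\infty}\gamma_k$, $\bar\beta=\lim_{k\to\infty}\beta_k$. For $i$ with $\lambda_i<0$ define $b_{i,0}=0$ and, for $k\ge1$, \[ b_{i,k}=(\beta_k+\gamma_k\alpha|\lambda_i|)\Big(1-\frac{1}{1+b_{i,k-1}}\Big)+\alpha|\lambda_i|. \] Then for all $i$ with $\lambda_i<0$, $\lim_{k\to\infty}b_{i,k}=\bar b_i$, where \[ \bar b_i=\tfrac12\big(\bar\beta-1+\alpha|\lambda_i|(1+\bar\gamma)\big)+\tfrac12\sqrt{\big(\bar\beta-1+\alpha|\lambda_i|(1+\bar\gamma)\big)^2+4\alpha|\lambda_i|}. \]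
   Context: The quantities $b_{i,k}$ describe the per-iteration growth factors $x_i^{k+1}=x_i^0\prod_{m=0}^k(1+b_{i,m})$ of the components along negative-curvature directions for the accelerated gradient iteration $y^k=x^k+\gamma_k(x^k-x^{k-1})$, $x^{k+1}=x^k+\beta_k(x^k-x^{k-1})-\alpha Hy^k$, $x^0=x^1$, applied to $f(x)=\frac12x^THx$. *)

theory Defs
  imports Complex_Main
begin

primrec growth_b :: "real \<Rightarrow> (nat \<Rightarrow> real) \<Rightarrow> (nat \<Rightarrow> real) \<Rightarrow> real \<Rightarrow> nat \<Rightarrow> real" where
  "growth_b alpha beta gamma lam 0 = 0"
| "growth_b alpha beta gamma lam (Suc k) =
     (beta (Suc k) + gamma (Suc k) * alpha * \<bar>lam\<bar>) * (1 - 1 / (1 + growth_b alpha beta gamma lam k))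
     + alpha * \<bar>lam\<bar>"

end

theory Submission
  imports Defs
begin

text \<open>With \<open>a = \<alpha>|\<lambda>|\<close> and \<open>c\<^sub>k = \<beta>\<^sub>k + \<gamma>\<^sub>k a\<close> the recursion reads
  \<open>b\<^sub>k = c\<^sub>k (1 - 1/(1 + b\<^sub>k\<^sub>-\<^sub>1)) + a\<close>. The map \<open>y \<mapsto> 1 - 1/(1 + y)\<close> is increasing with values
  in \<open>[0, 1]\<close> on \<open>y \<ge> 0\<close> and \<open>c\<^sub>k\<close> is nonnegative, increasing and at most \<open>1 + a\<close>, so \<open>b\<^sub>k\<close>
  increases from \<open>b\<^sub>0 = 0\<close> and stays below \<open>1 + 2a\<close>. Its limit \<open>l \<ge> 0\<close> is a fixed point
  \<open>l = C l/(1 + l) + a\<close> with \<open>C = lim c\<close>, i.e. a nonnegative root of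
  \<open>l\<^sup>2 - (C - 1 + a) l - a = 0\<close>; since \<open>a > 0\<close> this is the larger root.\<close>

lemma LIMSEQ_lim_if_mono_from_one_bounded:
  fixes f :: "nat \<Rightarrow> real"
  assumes "\<And>k. 1 \<le> k \<Longrightarrow> f k \<le> f (Suc k)" and "\<And>k. 1 \<le> k \<Longrightarrow> f k \<le> B"
  shows "f \<longlonglongrightarrow> lim f"
proof -
  have "incseq (\<lambda>k. f (Suc k))"
    by (rule incseq_SucI) (use assms(1) in auto)
  moreover have "\<forall>k. f (Suc k) \<le> B"
    using assms(2) by simp
  ultimately obtain L where "(\<lambda>k. f (Suc k)) \<longlonglongrightarrow> L"
    using incseq_convergent by blast
  then show ?thesis
    using LIMSEQ_imp_Suc limI by blast
qed

lemma nonneg_quadratic_root_eq: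
  fixes s a l :: real
  assumes "0 < a" and "0 \<le> l" and "l\<^sup>2 - s * l - a = 0"
  shows "l = s / 2 + sqrt (s\<^sup>2 + 4 * a) / 2"
proof -
  have "(2 * l - s)\<^sup>2 = s\<^sup>2 + 4 * a"
    using assms(3) by (simp add: power2_eq_square algebra_simps)
  then have root: "sqrt (s\<^sup>2 + 4 * a) = \<bar>2 * l - s\<bar>"
    by (metis real_sqrt_abs)
  have "\<bar>s\<bar> < sqrt (s\<^sup>2 + 4 * a)"
    using real_sqrt_less_mono[of "s\<^sup>2" "s\<^sup>2 + 4 * a"] assms(1) by simp
  \<comment> \<open>if \<open>2l - s\<close> were negative, \<open>s - 2l > |s|\<close> would force \<open>l < 0\<close>\<close>
  with root assms(2) have "2 * l - s = sqrt (s\<^sup>2 + 4 * a)"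
    by linarith
  then show ?thesis
    by simp
qed

lemma fixed_point_eq_positive_root:
  fixes C a l :: real
  assumes "0 < a" and "0 \<le> l" and "l = C * (1 - 1 / (1 + l)) + a"
  shows "l = (C - 1 + a) / 2 + sqrt ((C - 1 + a)\<^sup>2 + 4 * a) / 2"
proof (rule nonneg_quadratic_root_eq[OF assms(1,2)])
  have "l * (1 + l) = C * l + a * (1 + l)"
    using assms(2,3) by (simp add: field_simps)
  then show "l\<^sup>2 - (C - 1 + a) * l - a = 0"
    by (simp add: power2_eq_square algebra_simps)
qed

lemma one_minus_inverse_one_plus_bounds:
  fixes y :: real
  assumes "0 \<le> y"
  shows "0 \<le> 1 - 1 / (1 + y)" and "1 - 1 / (1 + y) \<le> 1"
  using assms by (simp_all add: field_simps)

lemma one_minus_inverse_one_plus_mono: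
  fixes y z :: real
  assumes "0 \<le> y" and "y \<le> z"
  shows "1 - 1 / (1 + y) \<le> 1 - 1 / (1 + z)"
  using assms by (simp add: frac_le)

locale momentum_schedule =
  fixes alpha lam :: real and beta gamma :: "nat \<Rightarrow> real"
  assumes step_pos: "0 < alpha * \<bar>lam\<bar>"
    and gamma_range: "\<And>k. 1 \<le> k \<Longrightarrow> 0 \<le> gamma k \<and> gamma k \<le> 1"
    and beta_range: "\<And>k. 1 \<le> k \<Longrightarrow> 0 \<le> beta k \<and> beta k \<le> 1"
    and gamma_mono: "\<And>k. 1 \<le> k \<Longrightarrow> gamma k \<le> gamma (Suc k)"
    and beta_mono: "\<And>k. 1 \<le> k \<Longrightarrow> beta k \<le> beta (Suc k)"
begin

abbreviation "a \<equiv> alpha * \<bar>lam\<bar>"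
abbreviation "b \<equiv> growth_b alpha beta gamma lam"

definition coeff :: "nat \<Rightarrow> real" where
  "coeff k = beta k + gamma k * a"

lemma b_Suc: "b (Suc k) = coeff (Suc k) * (1 - 1 / (1 + b k)) + a"
  by (simp add: coeff_def mult.assoc)

lemma coeff_nonneg: "0 \<le> coeff (Suc k)"
  using beta_range[of "Suc k"] gamma_range[of "Suc k"] step_pos by (simp add: coeff_def)

lemma coeff_le: "coeff (Suc k) \<le> 1 + a"
  using beta_range[of "Suc k"] gamma_range[of "Suc k"] step_pos
    mult_left_le_one_le[of a "gamma (Suc k)"]
  by (simp add: coeff_def)

lemma coeff_mono: "coeff (Suc k) \<le> coeff (Suc (Suc k))"
  using beta_mono[of "Suc k"] gamma_mono[of "Suc k"] step_pos
  by (simp add: coeff_def add_mono mult_right_mono)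

lemma b_nonneg: "0 \<le> b k"
proof (induction k)
  case 0
  then show ?case by simp
next
  case (Suc k)
  show ?case
    unfolding b_Suc
    using coeff_nonneg one_minus_inverse_one_plus_bounds(1)[OF Suc] step_pos by simp
qed

lemma b_le_Suc: "b k \<le> b (Suc k)"
proof (induction k)
  case 0
  then show ?case using step_pos by simp
next
  case (Suc k)
  have "coeff (Suc k) * (1 - 1 / (1 + b k))
      \<le> coeff (Suc (Suc k)) * (1 - 1 / (1 + b (Suc k)))"
    by (intro mult_mono coeff_mono one_minus_inverse_one_plus_mono[OF b_nonneg Suc]
        coeff_nonneg one_minus_inverse_one_plus_bounds(1)[OF b_nonneg])
  then show ?case
    by (simp only: b_Suc add_le_cancel_right)
qed

lemma b_bounded: "b k \<le> 1 + 2 * a"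
proof (cases k)
  case 0
  then show ?thesis using step_pos by simp
next
  case (Suc m)
  have "coeff (Suc m) * (1 - 1 / (1 + b m)) \<le> (1 + a) * 1"
    by (intro mult_mono coeff_le coeff_nonneg one_minus_inverse_one_plus_bounds[OF b_nonneg])
      (use step_pos in simp)
  then show ?thesis
    unfolding Suc b_Suc by simp
qed

lemma b_converges: obtains l where "b \<longlonglongrightarrow> l" and "0 \<le> l"
proof -
  have "incseq b"
    using b_le_Suc by (rule incseq_SucI)
  moreover have "\<forall>k. b k \<le> 1 + 2 * a"
    using b_bounded by blast
  ultimately obtain l where l: "b \<longlonglongrightarrow> l"
    by (rule incseq_convergent)
  have "0 \<le> l"
    by (rule LIMSEQ_le_const[OF l]) (simp add: b_nonneg)
  with l show ?thesis
    by (rule that)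
qed

lemma coeff_tendsto: "coeff \<longlonglongrightarrow> lim beta + lim gamma * a"
proof -
  have "beta \<longlonglongrightarrow> lim beta"
    by (rule LIMSEQ_lim_if_mono_from_one_bounded[where B = 1]) (use beta_mono beta_range in auto)
  moreover have "gamma \<longlonglongrightarrow> lim gamma"
    by (rule LIMSEQ_lim_if_mono_from_one_bounded[where B = 1]) (use gamma_mono gamma_range in auto)
  ultimately show ?thesis
    unfolding coeff_def by (intro tendsto_intros)
qed

lemma b_tendsto:
  "b \<longlonglongrightarrow> (1/2) * (lim beta - 1 + a * (1 + lim gamma))
              + (1/2) * sqrt ((lim beta - 1 + a * (1 + lim gamma))\<^sup>2 + 4 * a)"
proof -
  define C where "C = lim beta + lim gamma * a"
  obtain l where l: "b \<longlonglongrightarrow> l" and l_nonneg: "0 \<le> l"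
    by (rule b_converges)
  have "(\<lambda>k. coeff (Suc k) * (1 - 1 / (1 + b k)) + a) \<longlonglongrightarrow> C * (1 - 1 / (1 + l)) + a"
    using coeff_tendsto l l_nonneg unfolding C_def
    by (intro tendsto_intros LIMSEQ_Suc) auto
  moreover have "(\<lambda>k. b (Suc k)) \<longlonglongrightarrow> l"
    using l by (rule LIMSEQ_Suc)
  ultimately have "l = C * (1 - 1 / (1 + l)) + a"
    unfolding b_Suc using LIMSEQ_unique by blast
  then have "l = (C - 1 + a) / 2 + sqrt ((C - 1 + a)\<^sup>2 + 4 * a) / 2"
    using fixed_point_eq_positive_root step_pos l_nonneg by blast
  moreover have "C - 1 + a = lim beta - 1 + a * (1 + lim gamma)"
    unfolding C_def by (simp add: algebra_simps)
  ultimately show ?thesis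
    using l by simp
qed

end

theorem theorem4p2:
  fixes lam :: "nat \<Rightarrow> real" and n p :: nat and alpha :: real
    and beta gamma :: "nat \<Rightarrow> real"
  assumes p_range: "1 \<le> p" "p < n"
    and sorted: "\<And>i j. 1 \<le> i \<Longrightarrow> i \<le> j \<Longrightarrow> j \<le> n \<Longrightarrow> lam j \<le> lam i"
    and nonneg: "lam (n - p) \<ge> 0"
    and neg: "lam (n - p + 1) < 0"
    and alpha_pos: "0 < alpha"
    and alpha_lt: "alpha < 1 / max (lam 1) (- lam n)"
    and gamma_range: "\<And>k. 1 \<le> k \<Longrightarrow> 0 \<le> gamma k \<and> gamma k \<le> 1"
    and beta_range: "\<And>k. 1 \<le> k \<Longrightarrow> 0 \<le> beta k \<and> beta k \<le> 1"
    and gamma_mono: "\<And>k. 1 \<le> k \<Longrightarrow> gamma k \<le> gamma (Suc k)"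
    and beta_mono: "\<And>k. 1 \<le> k \<Longrightarrow> beta k \<le> beta (Suc k)"
  shows "\<forall>i. 1 \<le> i \<and> i \<le> n \<and> lam i < 0 \<longrightarrow>
           (growth_b alpha beta gamma (lam i) \<longlonglongrightarrow>
              (1/2) * (lim beta - 1 + alpha * \<bar>lam i\<bar> * (1 + lim gamma))
              + (1/2) * sqrt ((lim beta - 1 + alpha * \<bar>lam i\<bar> * (1 + lim gamma))\<^sup>2
                              + 4 * alpha * \<bar>lam i\<bar>))"
proof (intro allI impI)
  fix i
  assume "1 \<le> i \<and> i \<le> n \<and> lam i < 0"
  then have "0 < alpha * \<bar>lam i\<bar>"
    using alpha_pos by (intro mult_pos_pos) auto
  then interpret momentum_schedule alpha "lam i" beta gamma
    using gamma_range beta_range gamma_mono beta_mono by unfold_locales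
  show "growth_b alpha beta gamma (lam i) \<longlonglongrightarrow>
          (1/2) * (lim beta - 1 + alpha * \<bar>lam i\<bar> * (1 + lim gamma))
          + (1/2) * sqrt ((lim beta - 1 + alpha * \<bar>lam i\<bar> * (1 + lim gamma))\<^sup>2
                          + 4 * alpha * \<bar>lam i\<bar>)"
    using b_tendsto by (simp add: mult.assoc)
qed

end
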